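(* Let $p,q$ be squarefree positive integers such that $K=\mathbb{Q}(\sqrt p,\sqrt q)$ has degree $4$ over $\mathbb{Q}$, and let $r=\frac{pq}{\gcd(p,q)^2}$. Suppose that $\alpha=a+b\sqrt p+c\sqrt q+d\sqrt r$ (with $a,b,c,d\in\mathbb{Q}$) is a totally positive element of the ring of integers $\mathcal{O}_K$, and let $\mathrm{Tr}$ denote the trace from $K$ to $\mathbb{Q}$. Then: (1) if $b\neq 0$, then $\mathrm{Tr}(\alpha)>\sqrt p$; (2) if $c\neq 0$, then $\mathrm{Tr}(\alpha)>\sqrt q$; (3) if $d\neq 0$, then $\mathrm{Tr}(\alpha)>\sqrt r$. Finally, if $\alpha\notin\mathbb{Z}$, then $\mathrm{Tr}(\alpha)>\min(\sqrt p,\sqrt q,\sqrt r)$.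
   Context: An element of $K$ is totally positive if all of its images under the four real embeddings of $K$ are positive. *)

theory Defs
  imports "HOL-Analysis.Analysis" "HOL-Computational_Algebra.Computational_Algebra"
begin

text \<open>With
  r = pq / gcd(p,q)^2 we have sqrt r = sqrt p * sqrt q / gcd(p,q), so the four real
  embeddings send sqrt p to s sqrt p, sqrt q to t sqrt q and sqrt r to s t sqrt r,
  for signs s, t in {1, -1}.\<close>

definition biq_r :: "nat \<Rightarrow> nat \<Rightarrow> nat" where
  "biq_r p q = (p * q) div (gcd p q)^2"

definition biq_elem :: "nat \<Rightarrow> nat \<Rightarrow> real \<Rightarrow> real \<Rightarrow> real \<Rightarrow> real \<Rightarrow> real" where
  "biq_elem p q a b c d = a + b * sqrt p + c * sqrt q + d * sqrt (biq_r p q)"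

definition biq_emb :: "nat \<Rightarrow> nat \<Rightarrow> real \<Rightarrow> real \<Rightarrow> real \<Rightarrow> real \<Rightarrow> real \<Rightarrow> real \<Rightarrow> real" where
  "biq_emb p q s t a b c d = a + s * b * sqrt p + t * c * sqrt q + s * t * d * sqrt (biq_r p q)"

definition biq_signs :: "real set" where
  "biq_signs = {1, -1}"

definition biq_degree4 :: "nat \<Rightarrow> nat \<Rightarrow> bool" where
  "biq_degree4 p q \<longleftrightarrow> (\<forall>a b c d. a \<in> \<rat> \<and> b \<in> \<rat> \<and> c \<in> \<rat> \<and> d \<in> \<rat> \<and>
      biq_elem p q a b c d = 0 \<longrightarrow> a = 0 \<and> b = 0 \<and> c = 0 \<and> d = 0)"

definition biq_totally_positive :: "nat \<Rightarrow> nat \<Rightarrow> real \<Rightarrow> real \<Rightarrow> real \<Rightarrow> real \<Rightarrow> bool" where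
  "biq_totally_positive p q a b c d \<longleftrightarrow>
     (\<forall>s\<in>biq_signs. \<forall>t\<in>biq_signs. biq_emb p q s t a b c d > 0)"

definition biq_trace :: "nat \<Rightarrow> nat \<Rightarrow> real \<Rightarrow> real \<Rightarrow> real \<Rightarrow> real \<Rightarrow> real" where
  "biq_trace p q a b c d = (\<Sum>s\<in>biq_signs. \<Sum>t\<in>biq_signs. biq_emb p q s t a b c d)"

end

theory Submission
  imports Defs "Jordan_Normal_Form.Char_Poly"
begin

(*
  The four real embeddings send a + b sqrt p + c sqrt q + d sqrt r to
  a \<plusminus> b sqrt p \<plusminus> c sqrt q \<plusminus> d sqrt r, so the trace is 4a and adding two of them shows
  |b| sqrt p < a (and likewise for c, d) by total positivity. The point is that 4b, 4c, 4d are integers; then 4a > |4b| sqrt p \<ge> sqrt p.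

  Since 1, sqrt p, sqrt q, sqrt r are linearly independent over Q, the embeddings commute with
  rational polynomial identities, so all four conjugates are roots of a monic integer polynomial
  of the element. Hence 4b sqrt p, a \<plusminus>1-combination of the conjugates, stabilises the
  finitely generated Z-module spanned by monomials in the conjugates, and the determinant trick
  makes its square (4b)^2 p an algebraic integer. Being rational, it is an integer, and
  squarefreeness of p forces 4b \<in> Z.
*)

lemma algebraic_int_if_integral_eigenvector:
  fixes x :: "'a :: field_char_0" and v :: "nat \<Rightarrow> 'a" and M :: "nat \<Rightarrow> nat \<Rightarrow> int"
  assumes "i0 < n" "v i0 \<noteq> 0"
    and eigen: "\<And>i. i < n \<Longrightarrow> x * v i = (\<Sum>j<n. of_int (M i j) * v j)"
  shows "algebraic_int x"
proof -
  define A :: "int mat" where "A = mat n n (\<lambda>(i,j). M i j)"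
  have A: "A \<in> carrier_mat n n" by (simp add: A_def)
  define B :: "'a mat" where "B = of_int_hom.mat_hom A"
  have B: "B \<in> carrier_mat n n" using A by (simp add: B_def)
  define w where "w = vec n v"
  have "eigenvector B w x"
    unfolding eigenvector_def
  proof (intro conjI)
    show "w \<in> carrier_vec (dim_row B)" using B by (simp add: w_def)
    show "w \<noteq> 0\<^sub>v (dim_row B)"
    proof
      assume "w = 0\<^sub>v (dim_row B)"
      then have "w $ i0 = 0" using B assms(1) by simp
      then show False using assms(1,2) by (simp add: w_def)
    qed
    show "B *\<^sub>v w = x \<cdot>\<^sub>v w"
    proof (rule eq_vecI)
      fix i assume "i < dim_vec (x \<cdot>\<^sub>v w)"
      then have i: "i < n" by (simp add: w_def)
      have "(B *\<^sub>v w) $ i = (\<Sum>j<n. of_int (M i j) * v j)"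
        using i B unfolding B_def A_def w_def
        by (simp add: mult_mat_vec_def scalar_prod_def row_def lessThan_atLeast0)
      then show "(B *\<^sub>v w) $ i = (x \<cdot>\<^sub>v w) $ i" using i eigen[OF i] by (simp add: w_def)
    qed (simp add: w_def B_def A_def)
  qed
  then have "poly (char_poly B) x = 0"
    using eigenvalue_root_char_poly[OF B] by (auto simp: eigenvalue_def)
  moreover have "char_poly B = of_int_poly (char_poly A)"
    unfolding B_def by (rule of_int_hom.char_poly_hom[OF A])
  moreover have "lead_coeff (char_poly A) = 1" using degree_monic_char_poly[OF A] by simp
  ultimately show ?thesis unfolding algebraic_int_altdef_ipoly by auto
qed

definition int_span :: "'a :: comm_ring_1 set \<Rightarrow> 'a set" where
  "int_span G = {y. \<exists>c. y = (\<Sum>g\<in>G. of_int (c g) * g)}"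

lemma int_span_0: "0 \<in> int_span G"
  unfolding int_span_def by (intro CollectI exI[of _ "\<lambda>_. 0"]) simp

lemma int_span_add:
  assumes "y \<in> int_span G" "z \<in> int_span G"
  shows "y + z \<in> int_span G"
proof -
  obtain c d where "y = (\<Sum>g\<in>G. of_int (c g) * g)" "z = (\<Sum>g\<in>G. of_int (d g) * g)"
    using assms unfolding int_span_def by blast
  then have "y + z = (\<Sum>g\<in>G. of_int (c g + d g) * g)"
    by (simp add: sum.distrib distrib_right)
  then show ?thesis unfolding int_span_def by (intro CollectI exI) assumption
qed

lemma int_span_of_int_mult:
  assumes "y \<in> int_span G"
  shows "of_int k * y \<in> int_span G"
proof -
  obtain c where "y = (\<Sum>g\<in>G. of_int (c g) * g)"
    using assms unfolding int_span_def by blast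
  then have "of_int k * y = (\<Sum>g\<in>G. of_int (k * c g) * g)"
    by (simp add: sum_distrib_left mult.assoc)
  then show ?thesis unfolding int_span_def by (intro CollectI exI) assumption
qed

lemma int_span_sum:
  "(\<And>a. a \<in> A \<Longrightarrow> f a \<in> int_span G) \<Longrightarrow> sum f A \<in> int_span G"
  by (induction A rule: infinite_finite_induct) (auto intro: int_span_add int_span_0)

lemma int_span_generator:
  assumes "finite G" "g \<in> G"
  shows "g \<in> int_span G"
proof -
  have "(\<Sum>h\<in>G. of_int (if h = g then 1 else 0) * h) = (\<Sum>h\<in>G. if h = g then g else 0)"
    by (rule sum.cong) auto
  also have "\<dots> = g" using assms by simp
  finally have "g = (\<Sum>h\<in>G. of_int (if h = g then 1 else 0) * h)" ..
  then show ?thesis unfolding int_span_def by (intro CollectI exI) assumption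
qed

definition stabilizes_int_span :: "'a :: comm_ring_1 \<Rightarrow> 'a set \<Rightarrow> bool" where
  "stabilizes_int_span x G \<longleftrightarrow> (\<forall>z\<in>int_span G. x * z \<in> int_span G)"

lemma stabilizes_int_spanI:
  assumes "\<And>g. g \<in> G \<Longrightarrow> x * g \<in> int_span G"
  shows "stabilizes_int_span x G"
  unfolding stabilizes_int_span_def
proof
  fix z assume "z \<in> int_span G"
  then obtain c where z: "z = (\<Sum>g\<in>G. of_int (c g) * g)"
    unfolding int_span_def by blast
  have "x * z = (\<Sum>g\<in>G. of_int (c g) * (x * g))"
    unfolding z by (simp add: sum_distrib_left algebra_simps)
  also have "\<dots> \<in> int_span G"
    using assms by (intro int_span_sum int_span_of_int_mult) auto
  finally show "x * z \<in> int_span G" .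
qed

lemma stabilizes_int_span_add:
  "stabilizes_int_span x G \<Longrightarrow> stabilizes_int_span y G \<Longrightarrow> stabilizes_int_span (x + y) G"
  unfolding stabilizes_int_span_def by (auto simp: distrib_right intro: int_span_add)

lemma stabilizes_int_span_mult:
  "stabilizes_int_span x G \<Longrightarrow> stabilizes_int_span y G \<Longrightarrow> stabilizes_int_span (x * y) G"
  unfolding stabilizes_int_span_def by (metis mult.assoc)

lemma stabilizes_int_span_uminus:
  "stabilizes_int_span x G \<Longrightarrow> stabilizes_int_span (- x) G"
  unfolding stabilizes_int_span_def using int_span_of_int_mult[of _ G "-1"] by auto

lemma stabilizes_int_span_diff:
  "stabilizes_int_span x G \<Longrightarrow> stabilizes_int_span y G \<Longrightarrow> stabilizes_int_span (x - y) G"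
  using stabilizes_int_span_add[of x G "- y"] stabilizes_int_span_uminus[of y G] by simp

lemma algebraic_int_if_stabilizes_int_span:
  fixes x :: "'a :: field_char_0"
  assumes "finite G" "g0 \<in> G" "g0 \<noteq> 0" and "stabilizes_int_span x G"
  shows "algebraic_int x"
proof -
  obtain h where h: "bij_betw h {..<card G} G"
    using ex_bij_betw_nat_finite[OF assms(1)] by (auto simp: atLeast0LessThan)
  obtain i0 where i0: "i0 < card G" "h i0 = g0"
    using assms(2) h by (metis bij_betw_iff_bijections lessThan_iff)
  have "\<exists>c. x * h i = (\<Sum>g\<in>G. of_int (c g) * g)" if "i < card G" for i
  proof -
    have "h i \<in> int_span G"
      using that h assms(1) by (auto intro: int_span_generator dest: bij_betwE)
    then show ?thesis
      using assms(4) unfolding stabilizes_int_span_def int_span_def by auto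
  qed
  then obtain C where C: "\<And>i. i < card G \<Longrightarrow> x * h i = (\<Sum>g\<in>G. of_int (C i g) * g)"
    by metis
  show ?thesis
  proof (rule algebraic_int_if_integral_eigenvector[of i0 "card G" h x "\<lambda>i j. C i (h j)"])
    show "i0 < card G" "h i0 \<noteq> 0" using i0 assms(3) by simp_all
    fix i assume "i < card G"
    then show "x * h i = (\<Sum>j<card G. of_int (C i (h j)) * h j)"
      using C sum.reindex_bij_betw[OF h, of "\<lambda>g. of_int (C i g) * g"] by simp
  qed
qed

lemma monic_root_power_degree:
  fixes P :: "int poly" and y :: "'a :: field_char_0"
  assumes "lead_coeff P = 1" "poly (of_int_poly P) y = 0"
  shows "y ^ degree P = - (\<Sum>l<degree P. of_int (coeff P l) * y ^ l)"
proof -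
  have "0 = (\<Sum>i\<le>degree P. of_int (coeff P i) * y ^ i)"
    using assms(2) by (simp add: poly_altdef)
  also have "\<dots> = (\<Sum>l<degree P. of_int (coeff P l) * y ^ l) + y ^ degree P"
    using assms(1) by (simp add: lessThan_Suc_atMost[symmetric])
  finally show ?thesis by (simp add: eq_neg_iff_add_eq_0 add.commute)
qed

lemma stabilizing_int_span_of_monic_roots:
  fixes P :: "int poly" and R :: "'a :: field_char_0 set"
  assumes monic: "lead_coeff P = 1" and "finite R"
    and roots: "\<And>r. r \<in> R \<Longrightarrow> poly (of_int_poly P) r = 0"
  obtains G where "finite G" "1 \<in> G" "\<And>r. r \<in> R \<Longrightarrow> stabilizes_int_span r G"
proof -
  define n where "n = degree P"
  define monomial where "monomial = (\<lambda>k. \<Prod>r\<in>R. r ^ k r)"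
  define G where "G = monomial ` PiE R (\<lambda>_. {..<n})"
  have fin: "finite G" unfolding G_def using \<open>finite R\<close> by (intro finite_imageI finite_PiE) auto
  have "n > 0" if "r \<in> R" for r
  proof (rule ccontr)
    assume "\<not> n > 0"
    then have "P = 1" using monic degree_0_id[of P] by (simp add: n_def one_pCons)
    then show False using roots[OF that] by simp
  qed
  then have "restrict (\<lambda>_. 0) R \<in> PiE R (\<lambda>_. {..<n})" by auto
  moreover have "1 = monomial (restrict (\<lambda>_. 0) R)" by (simp add: monomial_def)
  ultimately have one: "1 \<in> G" unfolding G_def by blast
  have "stabilizes_int_span r G" if r: "r \<in> R" for r
  proof (rule stabilizes_int_spanI)
    fix g assume "g \<in> G"
    then obtain k where k: "k \<in> PiE R (\<lambda>_. {..<n})" and g: "g = monomial k"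
      unfolding G_def by blast
    define e where "e = (\<Prod>r'\<in>R - {r}. r' ^ k r')"
    have split: "monomial k' = r ^ k' r * (\<Prod>r'\<in>R - {r}. r' ^ k' r')" for k'
      unfolding monomial_def using r \<open>finite R\<close> by (simp add: prod.remove)
    have in_span: "r ^ l * e \<in> int_span G" if l: "l < n" for l
    proof -
      have "k(r := l) \<in> PiE R (\<lambda>_. {..<n})" using k l r by (auto simp: PiE_iff extensional_def)
      moreover have "r ^ l * e = monomial (k(r := l))"
        unfolding split[of "k(r := l)"] e_def by (auto intro!: prod.cong)
      ultimately have "r ^ l * e \<in> G" unfolding G_def by blast
      then show ?thesis using int_span_generator fin by blast
    qed
    have r_g: "r * g = r ^ (k r + 1) * e" unfolding g split[of k] e_def by simp
    show "r * g \<in> int_span G"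
    proof (cases "k r + 1 < n")
      case True
      then show ?thesis unfolding r_g by (rule in_span)
    next
      case False
      moreover have "k r < n" using k r by blast
      ultimately have "k r + 1 = n" by simp
      then have "r * g = r ^ n * e" using r_g by simp
      also have "\<dots> = (\<Sum>l<n. of_int (- coeff P l) * (r ^ l * e))"
        using monic_root_power_degree[OF monic roots[OF r]]
        by (simp add: n_def sum_distrib_right sum_negf mult.assoc)
      also have "\<dots> \<in> int_span G" by (intro int_span_sum int_span_of_int_mult in_span) auto
      finally show ?thesis .
    qed
  qed
  with fin one that show ?thesis by blast
qed

lemma Ints_if_square_times_squarefree_Ints:
  fixes x :: real and n :: nat
  assumes "x \<in> \<rat>" "squarefree n" "n > 0" "x\<^sup>2 * n \<in> \<int>"
  shows "x \<in> \<int>"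
proof -
  obtain u v :: int where v: "v > 0" "coprime u v" and x: "x = of_int u / of_int v"
    using assms(1) by (rule Rats_cases')
  obtain w :: int where w: "x\<^sup>2 * n = of_int w" using assms(4) by (auto elim: Ints_cases)
  have "of_int (u\<^sup>2 * int n) = (of_int (w * v\<^sup>2) :: real)"
    using w v unfolding x by (simp add: field_simps power2_eq_square)
  then have "u\<^sup>2 * int n = w * v\<^sup>2" by (rule of_int_eq_iff[THEN iffD1])
  then have "v\<^sup>2 dvd u\<^sup>2 * int n" by simp
  moreover have "coprime (v\<^sup>2) (u\<^sup>2)" using v(2) by (simp add: coprime_commute)
  ultimately have "v\<^sup>2 dvd int n" by (simp add: coprime_dvd_mult_right_iff)
  then have "(nat v)\<^sup>2 dvd n" using v(1)
    by (metis int_dvd_int_iff int_nat_eq less_le_not_le of_nat_power)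
  then have "nat v dvd 1" using assms(2) squarefreeD by blast
  then have "v = 1" using v(1) by simp
  then show ?thesis using x by simp
qed

lemma mult_by_basis_relations:
  fixes P Q R G A B p q r a b c d a' b' c' d' :: "'a :: comm_ring_1"
  assumes "P*Q = G*R" "P*R = A*Q" "Q*R = B*P" "P*P = p" "Q*Q = q" "R*R = r"
  shows "(a + b*P + c*Q + d*R) * (a' + b'*P + c'*Q + d'*R) =
    (a*a' + p*b*b' + q*c*c' + r*d*d') + (a*b' + b*a' + B*(c*d' + d*c'))*P
    + (a*c' + c*a' + A*(b*d' + d*b'))*Q + (a*d' + d*a' + G*(b*c' + c*b'))*R"
proof -
  have "(a + b*P + c*Q + d*R) * (a' + b'*P + c'*Q + d'*R) =
     a*a' + b*b'*(P*P) + c*c'*(Q*Q) + d*d'*(R*R) + (a*b' + b*a')*P + (c*d' + d*c')*(Q*R)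
    + (a*c' + c*a')*Q + (b*d' + d*b')*(P*R) + (a*d' + d*a')*R + (b*c' + c*b')*(P*Q)"
    by (simp add: algebra_simps)
  also have "\<dots> = (a*a' + p*b*b' + q*c*c' + r*d*d') + (a*b' + b*a' + B*(c*d' + d*c'))*P
    + (a*c' + c*a' + A*(b*d' + d*b'))*Q + (a*d' + d*a' + G*(b*c' + c*b'))*R"
    unfolding assms by (simp add: algebra_simps)
  finally show ?thesis .
qed

lemma sqrt_mult_eq_if_mult_eq:
  fixes x y z a :: real
  assumes "x * y = a\<^sup>2 * z" "a \<ge> 0"
  shows "sqrt x * sqrt y = a * sqrt z"
  by (metis assms real_sqrt_mult real_sqrt_abs abs_of_nonneg)

lemma biq_sqrt_relations:
  fixes p q :: nat
  assumes "p > 0" "q > 0"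
  defines "g \<equiv> gcd p q"
  shows "biq_r p q = (p div g) * (q div g)"
    and "sqrt p * sqrt q = g * sqrt (biq_r p q)"
    and "sqrt p * sqrt (biq_r p q) = (p div g) * sqrt q"
    and "sqrt q * sqrt (biq_r p q) = (q div g) * sqrt p"
proof -
  have "g > 0" using assms by (simp add: g_def)
  obtain p' q' where p: "p = g * p'" and q: "q = g * q'"
    unfolding g_def by (metis gcd_dvd1 gcd_dvd2 dvdE)
  have div: "p div g = p'" "q div g = q'" using p q \<open>g > 0\<close> by simp_all
  have "p * q = (g * g) * (p' * q')" using p q by simp
  then have r: "biq_r p q = p' * q'"
    using \<open>g > 0\<close> by (simp add: biq_r_def g_def[symmetric] power2_eq_square)
  show "biq_r p q = (p div g) * (q div g)" using r div by simp
  have "p * q = g\<^sup>2 * biq_r p q" "p * biq_r p q = p'\<^sup>2 * q" "q * biq_r p q = q'\<^sup>2 * p"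
    unfolding r by (simp_all add: p q power2_eq_square)
  then show "sqrt p * sqrt q = g * sqrt (biq_r p q)"
    and "sqrt p * sqrt (biq_r p q) = (p div g) * sqrt q"
    and "sqrt q * sqrt (biq_r p q) = (q div g) * sqrt p"
    unfolding div by (intro sqrt_mult_eq_if_mult_eq; simp flip: of_nat_mult of_nat_power)+
qed

lemma biq_emb_mult:
  fixes a b c d a' b' c' d' :: real
  assumes pq: "p > 0" "q > 0" and st: "s \<in> biq_signs" "t \<in> biq_signs"
  shows "biq_emb p q s t a b c d * biq_emb p q s t a' b' c' d' =
    biq_emb p q s t (a*a' + p*b*b' + q*c*c' + biq_r p q*d*d')
      (a*b' + b*a' + real (q div gcd p q)*(c*d' + d*c'))
      (a*c' + c*a' + real (p div gcd p q)*(b*d' + d*b'))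
      (a*d' + d*a' + real (gcd p q)*(b*c' + c*b'))"
proof -
  have ss: "s * s = 1" and tt: "t * t = 1" using st by (auto simp: biq_signs_def)
  define P where "P = s * sqrt p"
  define Q where "Q = t * sqrt q"
  define R where "R = s * t * sqrt (biq_r p q)"
  have emb: "\<And>a b c d. biq_emb p q s t a b c d = a + b*P + c*Q + d*R"
    by (simp add: biq_emb_def P_def Q_def R_def algebra_simps)
  have "P*Q = (s * t) * (sqrt p * sqrt q)" unfolding P_def Q_def by (simp add: algebra_simps)
  also have "\<dots> = real (gcd p q) * R"
    unfolding R_def biq_sqrt_relations(2)[OF pq] by (simp add: algebra_simps)
  finally have r1: "P*Q = real (gcd p q) * R" .
  have "P*R = (s * s) * t * (sqrt p * sqrt (biq_r p q))"
    unfolding P_def R_def by (simp add: algebra_simps)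
  also have "\<dots> = real (p div gcd p q) * Q"
    unfolding Q_def biq_sqrt_relations(3)[OF pq] ss by (simp add: algebra_simps)
  finally have r2: "P*R = real (p div gcd p q) * Q" .
  have "Q*R = s * (t * t) * (sqrt q * sqrt (biq_r p q))"
    unfolding Q_def R_def by (simp add: algebra_simps)
  also have "\<dots> = real (q div gcd p q) * P"
    unfolding P_def biq_sqrt_relations(4)[OF pq] tt by (simp add: algebra_simps)
  finally have r3: "Q*R = real (q div gcd p q) * P" .
  have r4: "P*P = real p" and r5: "Q*Q = real q" and r6: "R*R = real (biq_r p q)"
    unfolding P_def Q_def R_def using ss tt by (simp_all add: algebra_simps)
  show ?thesis unfolding emb by (rule mult_by_basis_relations[OF r1 r2 r3 r4 r5 r6])
qed

lemma poly_biq_emb: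
  fixes P :: "int poly"
  assumes pq: "p > 0" "q > 0" and rat: "a \<in> \<rat>" "b \<in> \<rat>" "c \<in> \<rat>" "d \<in> \<rat>"
  shows "\<exists>A B C D. A \<in> \<rat> \<and> B \<in> \<rat> \<and> C \<in> \<rat> \<and> D \<in> \<rat> \<and>
    (\<forall>s\<in>biq_signs. \<forall>t\<in>biq_signs.
      poly (of_int_poly P) (biq_emb p q s t a b c d) = biq_emb p q s t A B C D)"
proof (induction P)
  case 0
  show ?case by (rule exI[of _ 0])+ (simp add: biq_emb_def)
next
  case (pCons k P)
  then obtain A B C D where rat_coords: "A \<in> \<rat>" "B \<in> \<rat>" "C \<in> \<rat>" "D \<in> \<rat>"
    and IH: "\<forall>s\<in>biq_signs. \<forall>t\<in>biq_signs.
      poly (of_int_poly P) (biq_emb p q s t a b c d) = biq_emb p q s t A B C D" by blast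
  let ?A = "of_int k + (a*A + p*b*B + q*c*C + biq_r p q*d*D)"
  let ?B = "a*B + b*A + real (q div gcd p q)*(c*D + d*C)"
  let ?C = "a*C + c*A + real (p div gcd p q)*(b*D + d*B)"
  let ?D = "a*D + d*A + real (gcd p q)*(b*C + c*B)"
  show ?case
  proof (intro exI conjI ballI)
    show "?A \<in> \<rat>" "?B \<in> \<rat>" "?C \<in> \<rat>" "?D \<in> \<rat>"
      using rat_coords rat by (auto intro!: Rats_add Rats_mult)
    fix s t assume st: "s \<in> biq_signs" "t \<in> biq_signs"
    have "poly (of_int_poly (pCons k P)) (biq_emb p q s t a b c d)
        = of_int k + biq_emb p q s t a b c d * biq_emb p q s t A B C D"
    proof -
      have mp: "(of_int_poly (pCons k P) :: real poly) = pCons (of_int k) (of_int_poly P)"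
        using pCons(1) by (auto intro!: map_poly_pCons)
      show ?thesis unfolding mp poly_pCons using IH st by simp
    qed
    also have "\<dots> = biq_emb p q s t ?A ?B ?C ?D"
      unfolding biq_emb_mult[OF pq st] by (simp add: biq_emb_def algebra_simps)
    finally show "poly (of_int_poly (pCons k P)) (biq_emb p q s t a b c d)
        = biq_emb p q s t ?A ?B ?C ?D" .
  qed
qed

lemma biq_emb_1_1 [simp]: "biq_emb p q 1 1 a b c d = biq_elem p q a b c d"
  by (simp add: biq_emb_def biq_elem_def)

lemma biq_emb_root_if_elem_root:
  fixes P :: "int poly"
  assumes "p > 0" "q > 0" "biq_degree4 p q" "a \<in> \<rat>" "b \<in> \<rat>" "c \<in> \<rat>" "d \<in> \<rat>"
    and root: "poly (of_int_poly P) (biq_elem p q a b c d) = 0"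
    and "s \<in> biq_signs" "t \<in> biq_signs"
  shows "poly (of_int_poly P) (biq_emb p q s t a b c d) = 0"
proof -
  obtain A B C D where rat: "A \<in> \<rat>" "B \<in> \<rat>" "C \<in> \<rat>" "D \<in> \<rat>"
    and emb: "\<forall>s\<in>biq_signs. \<forall>t\<in>biq_signs.
      poly (of_int_poly P) (biq_emb p q s t a b c d) = biq_emb p q s t A B C D"
    using poly_biq_emb[OF assms(1,2,4-7), of P] by blast
  have "1 \<in> biq_signs" by (simp add: biq_signs_def)
  with emb have "biq_elem p q A B C D = poly (of_int_poly P) (biq_elem p q a b c d)"
    by (metis biq_emb_1_1)
  with root have "biq_elem p q A B C D = 0" by simp
  with assms(3) rat have "A = 0" "B = 0" "C = 0" "D = 0"
    unfolding biq_degree4_def by blast+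
  moreover have "poly (of_int_poly P) (biq_emb p q s t a b c d) = biq_emb p q s t A B C D"
    using emb assms(9,10) by blast
  ultimately show ?thesis by (simp add: biq_emb_def)
qed

lemma squarefree_biq_r:
  assumes "p > 0" "q > 0" "squarefree p" "squarefree q"
  shows "squarefree (biq_r p q)" and "biq_r p q > 0"
proof -
  have "coprime (p div gcd p q) (q div gcd p q)"
    using assms(1) by (intro div_gcd_coprime) auto
  moreover have "squarefree (p div gcd p q)"
    using assms(3) by (rule squarefree_mono[rotated]) (metis dvd_mult_div_cancel gcd_dvd1 dvd_triv_right)
  moreover have "squarefree (q div gcd p q)"
    using assms(4) by (rule squarefree_mono[rotated]) (metis dvd_mult_div_cancel gcd_dvd2 dvd_triv_right)
  ultimately show "squarefree (biq_r p q)"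
    using biq_sqrt_relations(1)[OF assms(1,2)] by (simp add: squarefree_mult_coprime)
  show "biq_r p q > 0"
    using biq_sqrt_relations(1)[OF assms(1,2)] assms(1,2)
    by (simp add: div_greater_zero_iff gcd_le1_nat gcd_le2_nat)
qed

lemma Ints_if_stabilizes_rat_mult_sqrt:
  fixes x :: real and n :: nat
  assumes "finite G" "1 \<in> G" "stabilizes_int_span (x * sqrt n) G"
    and "x \<in> \<rat>" "squarefree n" "n > 0"
  shows "x \<in> \<int>"
proof -
  have "stabilizes_int_span ((x * sqrt n) * (x * sqrt n)) G"
    by (rule stabilizes_int_span_mult[OF assms(3,3)])
  moreover have "(x * sqrt n) * (x * sqrt n) = x\<^sup>2 * n"
    by (simp add: power2_eq_square algebra_simps)
  ultimately have "algebraic_int (x\<^sup>2 * n)"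
    using algebraic_int_if_stabilizes_int_span[OF assms(1,2)] by simp
  moreover have "x\<^sup>2 * n \<in> \<rat>" using assms(4) by simp
  ultimately have "x\<^sup>2 * n \<in> \<int>" by (rule rational_algebraic_int_is_int)
  with assms(4-6) show ?thesis by (rule Ints_if_square_times_squarefree_Ints)
qed

lemma biq_coeffs_times_4_Ints:
  assumes "p > 0" "q > 0" "squarefree p" "squarefree q" "biq_degree4 p q"
    and "a \<in> \<rat>" "b \<in> \<rat>" "c \<in> \<rat>" "d \<in> \<rat>"
    and "algebraic_int (biq_elem p q a b c d)"
  shows "4 * b \<in> \<int>" "4 * c \<in> \<int>" "4 * d \<in> \<int>"
proof -
  obtain P :: "int poly" where P: "poly (of_int_poly P) (biq_elem p q a b c d) = 0" "lead_coeff P = 1"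
    using assms(10) unfolding algebraic_int_altdef_ipoly by blast
  define E where "E s t = biq_emb p q s t a b c d" for s t
  define R where "R = (\<lambda>(s, t). E s t) ` (biq_signs \<times> biq_signs)"
  have fin: "finite R" by (simp add: R_def biq_signs_def)
  have roots: "poly (of_int_poly P) r = 0" if "r \<in> R" for r
    using that biq_emb_root_if_elem_root[OF assms(1,2,5-9) P(1)] by (auto simp: R_def E_def)
  obtain G where G: "finite G" "1 \<in> G" "\<And>r. r \<in> R \<Longrightarrow> stabilizes_int_span r G"
    using stabilizing_int_span_of_monic_roots[OF P(2) fin roots] by blast
  have E: "stabilizes_int_span (E s t) G" if "s \<in> {1, -1}" "t \<in> {1, -1}" for s t
    using that by (intro G(3)) (auto simp: R_def biq_signs_def)
  have "4 * b * sqrt p = E 1 1 + E 1 (-1) - E (-1) 1 - E (-1) (-1)"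
    by (simp add: E_def biq_emb_def)
  then have "stabilizes_int_span (4 * b * sqrt p) G"
    by (simp only:) (intro stabilizes_int_span_add stabilizes_int_span_diff E; simp)
  then show "4 * b \<in> \<int>"
    using Ints_if_stabilizes_rat_mult_sqrt[OF G(1,2)] assms(1,3,7) by simp
  have "4 * c * sqrt q = E 1 1 - E 1 (-1) + E (-1) 1 - E (-1) (-1)"
    by (simp add: E_def biq_emb_def)
  then have "stabilizes_int_span (4 * c * sqrt q) G"
    by (simp only:) (intro stabilizes_int_span_add stabilizes_int_span_diff E; simp)
  then show "4 * c \<in> \<int>"
    using Ints_if_stabilizes_rat_mult_sqrt[OF G(1,2)] assms(2,4,8) by simp
  have "4 * d * sqrt (biq_r p q) = E 1 1 - E 1 (-1) - E (-1) 1 + E (-1) (-1)"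
    by (simp add: E_def biq_emb_def)
  then have "stabilizes_int_span (4 * d * sqrt (biq_r p q)) G"
    by (simp only:) (intro stabilizes_int_span_add stabilizes_int_span_diff E; simp)
  then show "4 * d \<in> \<int>"
    using Ints_if_stabilizes_rat_mult_sqrt[OF G(1,2)] squarefree_biq_r[OF assms(1-4)] assms(9)
    by simp
qed

lemma biq_totally_positive_abs_lt:
  assumes "biq_totally_positive p q a b c d"
  shows "\<bar>b\<bar> * sqrt p < a" "\<bar>c\<bar> * sqrt q < a" "\<bar>d\<bar> * sqrt (biq_r p q) < a"
proof -
  have "biq_emb p q s t a b c d > 0" if "s \<in> {1, -1}" "t \<in> {1, -1}" for s t
    using assms that unfolding biq_totally_positive_def biq_signs_def by blast
  from this[of 1 1] this[of 1 "-1"] this[of "-1" 1] this[of "-1" "-1"]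
  show "\<bar>b\<bar> * sqrt p < a" "\<bar>c\<bar> * sqrt q < a" "\<bar>d\<bar> * sqrt (biq_r p q) < a"
    unfolding biq_emb_def by (auto simp: abs_if)
qed

lemma biq_trace_eq: "biq_trace p q a b c d = 4 * a"
  by (simp add: biq_trace_def biq_signs_def biq_emb_def)

lemma lt_four_times_if_abs_mult_lt:
  fixes x y a :: real
  assumes "4 * x \<in> \<int>" "x \<noteq> 0" "y \<ge> 0" "\<bar>x\<bar> * y < a"
  shows "y < 4 * a"
proof -
  have "1 \<le> \<bar>4 * x\<bar>" using assms(1,2) by (intro Ints_nonzero_abs_ge1) auto
  then have "y \<le> \<bar>4 * x\<bar> * y" using mult_right_mono[of 1 _ y] assms(3) by simp
  with assms(4) show ?thesis by (simp add: abs_mult)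
qed

theorem lemma3:
  fixes p q :: nat and a b c d :: real
  assumes "p > 0" "q > 0" "squarefree p" "squarefree q"
    and "biq_degree4 p q"
    and "a \<in> \<rat>" "b \<in> \<rat>" "c \<in> \<rat>" "d \<in> \<rat>"
    and "algebraic_int (biq_elem p q a b c d)"
    and "biq_totally_positive p q a b c d"
  shows "(b \<noteq> 0 \<longrightarrow> biq_trace p q a b c d > sqrt p)
       \<and> (c \<noteq> 0 \<longrightarrow> biq_trace p q a b c d > sqrt q)
       \<and> (d \<noteq> 0 \<longrightarrow> biq_trace p q a b c d > sqrt (biq_r p q))
       \<and> (biq_elem p q a b c d \<notin> \<int> \<longrightarrow>
            biq_trace p q a b c d > min (sqrt p) (min (sqrt q) (sqrt (biq_r p q))))"
proof -
  note Ints = biq_coeffs_times_4_Ints[OF assms(1-10)]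
  note bounds = biq_totally_positive_abs_lt[OF assms(11)]
  have b: "b \<noteq> 0 \<longrightarrow> biq_trace p q a b c d > sqrt p"
    and c: "c \<noteq> 0 \<longrightarrow> biq_trace p q a b c d > sqrt q"
    and d: "d \<noteq> 0 \<longrightarrow> biq_trace p q a b c d > sqrt (biq_r p q)"
    using lt_four_times_if_abs_mult_lt Ints bounds by (simp_all add: biq_trace_eq)
  have "b \<noteq> 0 \<or> c \<noteq> 0 \<or> d \<noteq> 0" if "biq_elem p q a b c d \<notin> \<int>"
  proof (rule ccontr)
    assume "\<not> (b \<noteq> 0 \<or> c \<noteq> 0 \<or> d \<noteq> 0)"
    then have "biq_elem p q a b c d = a" by (simp add: biq_elem_def)
    with assms(6,10) that show False using rational_algebraic_int_is_int by metis
  qed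
  with b c d show ?thesis by auto
qed

end
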